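(* Let $(V,[\cdot,\cdot,\cdot],[\cdot,\cdot])$ be a Bol algebra over a field of characteristic $0$ and $U(V)$ its universal enveloping algebra. If $a,b\in V$ satisfy $[a,b]=0$, then the commutator $[L_a,L_b]=L_aL_b-L_bL_a$ of left multiplication operators on $U(V)$ is a derivation of $U(V)$.
   Context: A (left) Bol algebra is a vector space $V$ with a skew-symmetric bilinear bracket $[\cdot,\cdot]$ and a trilinear bracket $[\cdot,\cdot,\cdot]$ satisfying $[a,a,b]=0$, $[a,b,c]+[b,c,a]+[c,a,b]=0$, $[x,y,[a,b,c]]=[[x,y,a],b,c]+[a,[x,y,b],c]+[a,b,[x,y,c]]$, and $[a,b,[x,y]]=[[a,b,x],y]+[x,[a,b,y]]+[x,y,[a,b]]+[[a,b],[x,y]]$. Its universal enveloping algebra $U(V)$ (in the sense of Pérez-Izquierdo) is a unital non-associative bialgebra (comultiplication $\Delta(x)=\sum x_{(1)}\otimes x_{(2)}$, counit $\epsilon$) generated as a unital algebra by $V\subseteq U(V)$, $V$ being its space of primitive elements, satisfying $\sum a_{(1)}(y(a_{(2)}z))=\sum (a_{(1)}(ya_{(2)}))z$ for all $a,y,z\in U(V)$; in particular $(a,y,z)=-(y,a,z)$ for $a\in V$, $y,z\in U(V)$, where $(x,y,z)=(xy)z-x(yz)$, and for $a,b,c\in V$: $[a,b]=ab-ba$, $[a,b,c]=a(bc)-b(ac)-c(ab)+c(ba)$. $L_x$ denotes left multiplication by $x$. *)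

theory Defs
  imports Complex_Main
begin

text \<open>Setting: a field 'k of characteristic 0, a vector space 'u over 'k with scalar
multiplication smult (HOL locale vector_space). The whole type 'u plays the role of U(V),
V is a subset of it.\<close>

definition bilinear_map :: "('k::field \<Rightarrow> 'u::ab_group_add \<Rightarrow> 'u) \<Rightarrow> ('u \<Rightarrow> 'u \<Rightarrow> 'w::ab_group_add) \<Rightarrow> ('k \<Rightarrow> 'w \<Rightarrow> 'w) \<Rightarrow> bool" where
  "bilinear_map smult f smultw \<longleftrightarrow>
     (\<forall>x y z. f (x + y) z = f x z + f y z) \<and>
     (\<forall>x y z. f x (y + z) = f x y + f x z) \<and>
     (\<forall>c x y. f (smult c x) y = smultw c (f x y)) \<and>
     (\<forall>c x y. f x (smult c y) = smultw c (f x y))"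

definition trilinear_map :: "('k::field \<Rightarrow> 'u::ab_group_add \<Rightarrow> 'u) \<Rightarrow> ('u \<Rightarrow> 'u \<Rightarrow> 'u \<Rightarrow> 'u) \<Rightarrow> bool" where
  "trilinear_map smult g \<longleftrightarrow>
     (\<forall>x y z w. g (x + w) y z = g x y z + g w y z) \<and>
     (\<forall>x y z w. g x (y + w) z = g x y z + g x w z) \<and>
     (\<forall>x y z w. g x y (z + w) = g x y z + g x y w) \<and>
     (\<forall>c x y z. g (smult c x) y z = smult c (g x y z)) \<and>
     (\<forall>c x y z. g x (smult c y) z = smult c (g x y z)) \<and>
     (\<forall>c x y z. g x y (smult c z) = smult c (g x y z))"

text \<open>Elements of U \<otimes> U are represented by finite lists of pairs (sums of simple tensors).\<close>

definition tensor_sum :: "('u \<Rightarrow> 'u \<Rightarrow> 'w::comm_monoid_add) \<Rightarrow> ('u \<times> 'u) list \<Rightarrow> 'w" where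
  "tensor_sum f xs = sum_list (map (\<lambda>(p, q). f p q) xs)"

text \<open>Equality in U \<otimes> U: two representatives are equal iff every bilinear map U \<times> U \<rightarrow> U
agrees on them (universal property of the tensor product; U-valued maps suffice since U \<noteq> 0).\<close>

definition tensor_eq :: "('k::field \<Rightarrow> 'u::ab_group_add \<Rightarrow> 'u) \<Rightarrow> ('u \<times> 'u) list \<Rightarrow> ('u \<times> 'u) list \<Rightarrow> bool" where
  "tensor_eq smult xs ys \<longleftrightarrow>
     (\<forall>f. bilinear_map smult f smult \<longrightarrow> tensor_sum f xs = tensor_sum f ys)"

text \<open>Left Bol algebra on a subspace V (brackets need only be meaningful on V).\<close>

definition bol_algebra :: "('k::field \<Rightarrow> 'u::ab_group_add \<Rightarrow> 'u) \<Rightarrow> 'u set \<Rightarrow>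
    ('u \<Rightarrow> 'u \<Rightarrow> 'u) \<Rightarrow> ('u \<Rightarrow> 'u \<Rightarrow> 'u \<Rightarrow> 'u) \<Rightarrow> bool" where
  "bol_algebra smult V br br3 \<longleftrightarrow>
     vector_space smult \<and> module.subspace smult V \<and>
     (\<forall>a\<in>V. \<forall>b\<in>V. br a b \<in> V) \<and>
     (\<forall>a\<in>V. \<forall>b\<in>V. \<forall>c\<in>V. br3 a b c \<in> V) \<and>
     \<comment> \<open>bilinearity of the binary bracket on V\<close>
     (\<forall>a\<in>V. \<forall>b\<in>V. \<forall>c\<in>V. br (a + b) c = br a c + br b c) \<and>
     (\<forall>k. \<forall>a\<in>V. \<forall>b\<in>V. br (smult k a) b = smult k (br a b)) \<and>
     \<comment> \<open>skew-symmetry\<close>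
     (\<forall>a\<in>V. \<forall>b\<in>V. br a b = - br b a) \<and>
     \<comment> \<open>trilinearity of the ternary bracket on V\<close>
     (\<forall>a\<in>V. \<forall>a'\<in>V. \<forall>b\<in>V. \<forall>c\<in>V. br3 (a + a') b c = br3 a b c + br3 a' b c) \<and>
     (\<forall>a\<in>V. \<forall>b\<in>V. \<forall>b'\<in>V. \<forall>c\<in>V. br3 a (b + b') c = br3 a b c + br3 a b' c) \<and>
     (\<forall>a\<in>V. \<forall>b\<in>V. \<forall>c\<in>V. \<forall>c'\<in>V. br3 a b (c + c') = br3 a b c + br3 a b c') \<and>
     (\<forall>k. \<forall>a\<in>V. \<forall>b\<in>V. \<forall>c\<in>V. br3 (smult k a) b c = smult k (br3 a b c)) \<and>
     (\<forall>k. \<forall>a\<in>V. \<forall>b\<in>V. \<forall>c\<in>V. br3 a (smult k b) c = smult k (br3 a b c)) \<and>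
     (\<forall>k. \<forall>a\<in>V. \<forall>b\<in>V. \<forall>c\<in>V. br3 a b (smult k c) = smult k (br3 a b c)) \<and>
     \<comment> \<open>Bol algebra axioms\<close>
     (\<forall>a\<in>V. \<forall>b\<in>V. br3 a a b = 0) \<and>
     (\<forall>a\<in>V. \<forall>b\<in>V. \<forall>c\<in>V. br3 a b c + br3 b c a + br3 c a b = 0) \<and>
     (\<forall>x\<in>V. \<forall>y\<in>V. \<forall>a\<in>V. \<forall>b\<in>V. \<forall>c\<in>V.
        br3 x y (br3 a b c) = br3 (br3 x y a) b c + br3 a (br3 x y b) c + br3 a b (br3 x y c)) \<and>
     (\<forall>a\<in>V. \<forall>b\<in>V. \<forall>x\<in>V. \<forall>y\<in>V.
        br3 a b (br x y) = br (br3 a b x) y + br x (br3 a b y) + br3 x y (br a b) + br (br a b) (br x y))"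

definition bol_enveloping ::
  "('k::field \<Rightarrow> 'u::ab_group_add \<Rightarrow> 'u) \<Rightarrow> 'u set \<Rightarrow>
   ('u \<Rightarrow> 'u \<Rightarrow> 'u) \<Rightarrow> ('u \<Rightarrow> 'u \<Rightarrow> 'u \<Rightarrow> 'u) \<Rightarrow>
   ('u \<Rightarrow> 'u \<Rightarrow> 'u) \<Rightarrow> 'u \<Rightarrow> ('u \<Rightarrow> ('u \<times> 'u) list) \<Rightarrow> ('u \<Rightarrow> 'k) \<Rightarrow> bool" where
  "bol_enveloping smult V br br3 mul e Delta eps \<longleftrightarrow>
     bol_algebra smult V br br3 \<and>
     \<comment> \<open>unital (non-associative) algebra\<close>
     bilinear_map smult mul smult \<and>
     (\<forall>x. mul e x = x \<and> mul x e = x) \<and>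
     \<comment> \<open>Delta, eps linear\<close>
     (\<forall>x y. tensor_eq smult (Delta (x + y)) (Delta x @ Delta y)) \<and>
     (\<forall>c x. tensor_eq smult (Delta (smult c x)) (map (\<lambda>(p, q). (smult c p, q)) (Delta x))) \<and>
     (\<forall>x y. eps (x + y) = eps x + eps y) \<and>
     (\<forall>c x. eps (smult c x) = c * eps x) \<and>
     \<comment> \<open>coassociativity (equality in U \<otimes> U \<otimes> U tested by trilinear maps)\<close>
     (\<forall>x g. trilinear_map smult g \<longrightarrow>
        sum_list (map (\<lambda>(p, q). sum_list (map (\<lambda>(r, s). g r s q) (Delta p))) (Delta x)) =
        sum_list (map (\<lambda>(p, q). sum_list (map (\<lambda>(r, s). g p r s) (Delta q))) (Delta x))) \<and>
     \<comment> \<open>counit\<close>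
     (\<forall>x. sum_list (map (\<lambda>(p, q). smult (eps p) q) (Delta x)) = x \<and>
          sum_list (map (\<lambda>(p, q). smult (eps q) p) (Delta x)) = x) \<and>
     \<comment> \<open>Delta and eps are unital algebra morphisms\<close>
     (\<forall>x y. tensor_eq smult (Delta (mul x y))
        (concat (map (\<lambda>(p, q). map (\<lambda>(r, s). (mul p r, mul q s)) (Delta y)) (Delta x)))) \<and>
     tensor_eq smult (Delta e) [(e, e)] \<and>
     (\<forall>x y. eps (mul x y) = eps x * eps y) \<and> eps e = 1 \<and>
     \<comment> \<open>V is the space of primitive elements\<close>
     V = {x. tensor_eq smult (Delta x) [(x, e), (e, x)]} \<and>
     \<comment> \<open>U is generated as a unital algebra by V\<close>
     (\<forall>S. e \<in> S \<and> V \<subseteq> S \<and> (\<forall>x\<in>S. \<forall>y\<in>S. x + y \<in> S \<and> mul x y \<in> S) \<and>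
          (\<forall>c. \<forall>x\<in>S. smult c x \<in> S) \<longrightarrow> S = UNIV) \<and>
     \<comment> \<open>the defining identity\<close>
     (\<forall>a y z. sum_list (map (\<lambda>(a1, a2). mul a1 (mul y (mul a2 z))) (Delta a)) =
               sum_list (map (\<lambda>(a1, a2). mul (mul a1 (mul y a2)) z) (Delta a))) \<and>
     \<comment> \<open>brackets of V in terms of the product of U\<close>
     (\<forall>a\<in>V. \<forall>b\<in>V. br a b = mul a b - mul b a) \<and>
     (\<forall>a\<in>V. \<forall>b\<in>V. \<forall>c\<in>V.
        br3 a b c = mul a (mul b c) - mul b (mul a c) - mul c (mul a b) + mul c (mul b a))"

definition is_derivation :: "('k::field \<Rightarrow> 'u::ab_group_add \<Rightarrow> 'u) \<Rightarrow> ('u \<Rightarrow> 'u \<Rightarrow> 'u) \<Rightarrow> ('u \<Rightarrow> 'u) \<Rightarrow> bool" where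
  "is_derivation smult mul D \<longleftrightarrow>
     (\<forall>x y. D (x + y) = D x + D y) \<and> (\<forall>c x. D (smult c x) = smult c (D x)) \<and>
     (\<forall>x y. D (mul x y) = mul (D x) y + mul x (D y))"

end

theory Submission
  imports Defs
begin

text \<open>For a primitive element c the Perez-Izquierdo identity, evaluated on
\<open>\<Delta>(c) = c \<otimes> 1 + 1 \<otimes> c\<close>, says that the associator is skew in its first two arguments
when one of them is c. This lets \<open>L\<^sub>c\<close> be pushed through a product,
\<open>c(yz) = (cy)z + (yc)z - y(cz)\<close>. Expanding \<open>a(b(xy)) - b(a(xy))\<close> twice in this way, all
terms cancel except the two derivation terms and \<open>(a(xb) + (bx)a + (xb)a)y\<close> minus the
same expression with a and b exchanged; this difference vanishes by the same skewness
applied to \<open>a, x, b\<close> and \<open>b, x, a\<close>, because \<open>ab = ba\<close>.\<close>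

locale biadditive_product =
  fixes mul :: "'u::ab_group_add \<Rightarrow> 'u \<Rightarrow> 'u"  (infixl "\<cdot>" 70)
  assumes add_mult: "(x + y) \<cdot> z = x \<cdot> z + y \<cdot> z"
    and mult_add: "x \<cdot> (y + z) = x \<cdot> y + x \<cdot> z"
begin

definition associator :: "'u \<Rightarrow> 'u \<Rightarrow> 'u \<Rightarrow> 'u" where
  "associator x y z = (x \<cdot> y) \<cdot> z - x \<cdot> (y \<cdot> z)"

lemma diff_mult: "(x - y) \<cdot> z = x \<cdot> z - y \<cdot> z"
  using add_mult[of "x - y" y z] by (simp add: algebra_simps)

lemma mult_diff: "x \<cdot> (y - z) = x \<cdot> y - x \<cdot> z"
  using mult_add[of x "y - z" z] by (simp add: algebra_simps)

lemma left_mult_mult_if_associator_skew: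
  assumes "associator c y z = - associator y c z"
  shows "c \<cdot> (y \<cdot> z) = (c \<cdot> y) \<cdot> z + (y \<cdot> c) \<cdot> z - y \<cdot> (c \<cdot> z)"
  using assms unfolding associator_def by (simp add: algebra_simps)

lemma left_mult_commutator_Leibniz:
  assumes skew_a: "\<And>y z. associator a y z = - associator y a z"
    and skew_b: "\<And>y z. associator b y z = - associator y b z"
    and commute: "a \<cdot> b = b \<cdot> a"
  shows "a \<cdot> (b \<cdot> (x \<cdot> y)) - b \<cdot> (a \<cdot> (x \<cdot> y)) =
    (a \<cdot> (b \<cdot> x) - b \<cdot> (a \<cdot> x)) \<cdot> y + x \<cdot> (a \<cdot> (b \<cdot> y) - b \<cdot> (a \<cdot> y))"
proof -
  note La = left_mult_mult_if_associator_skew[OF skew_a]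
  note Lb = left_mult_mult_if_associator_skew[OF skew_b]
  \<comment> \<open>La and Lb are only used instantiated: as rewrite rules they loop via a(bx) and b(ax).\<close>
  have ab_expand: "a \<cdot> (b \<cdot> (x \<cdot> y)) =
      ((a \<cdot> (b \<cdot> x)) \<cdot> y + ((b \<cdot> x) \<cdot> a) \<cdot> y - (b \<cdot> x) \<cdot> (a \<cdot> y))
    + ((a \<cdot> (x \<cdot> b)) \<cdot> y + ((x \<cdot> b) \<cdot> a) \<cdot> y - (x \<cdot> b) \<cdot> (a \<cdot> y))
    - ((a \<cdot> x) \<cdot> (b \<cdot> y) + (x \<cdot> a) \<cdot> (b \<cdot> y) - x \<cdot> (a \<cdot> (b \<cdot> y)))"
    by (simp only: Lb[of x y] mult_add mult_diff La[of "b \<cdot> x" y] La[of "x \<cdot> b" y] La[of x "b \<cdot> y"])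
  have ba_expand: "b \<cdot> (a \<cdot> (x \<cdot> y)) =
      ((b \<cdot> (a \<cdot> x)) \<cdot> y + ((a \<cdot> x) \<cdot> b) \<cdot> y - (a \<cdot> x) \<cdot> (b \<cdot> y))
    + ((b \<cdot> (x \<cdot> a)) \<cdot> y + ((x \<cdot> a) \<cdot> b) \<cdot> y - (x \<cdot> a) \<cdot> (b \<cdot> y))
    - ((b \<cdot> x) \<cdot> (a \<cdot> y) + (x \<cdot> b) \<cdot> (a \<cdot> y) - x \<cdot> (b \<cdot> (a \<cdot> y)))"
    by (simp only: La[of x y] mult_add mult_diff Lb[of "a \<cdot> x" y] Lb[of "x \<cdot> a" y] Lb[of x "a \<cdot> y"])
  have axb: "a \<cdot> (x \<cdot> b) = (a \<cdot> x) \<cdot> b + (x \<cdot> a) \<cdot> b - x \<cdot> (b \<cdot> a)"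
    using La[of x b] commute by simp
  have bxa: "b \<cdot> (x \<cdot> a) = (b \<cdot> x) \<cdot> a + (x \<cdot> b) \<cdot> a - x \<cdot> (b \<cdot> a)"
    by (rule Lb)
  have "a \<cdot> (x \<cdot> b) + (b \<cdot> x) \<cdot> a + (x \<cdot> b) \<cdot> a = b \<cdot> (x \<cdot> a) + (a \<cdot> x) \<cdot> b + (x \<cdot> a) \<cdot> b"
    unfolding axb bxa by (simp add: algebra_simps)
  then have cancel: "(a \<cdot> (x \<cdot> b)) \<cdot> y + ((b \<cdot> x) \<cdot> a) \<cdot> y + ((x \<cdot> b) \<cdot> a) \<cdot> y =
      (b \<cdot> (x \<cdot> a)) \<cdot> y + ((a \<cdot> x) \<cdot> b) \<cdot> y + ((x \<cdot> a) \<cdot> b) \<cdot> y"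
    by (metis add_mult)
  show ?thesis
    unfolding ab_expand ba_expand diff_mult mult_diff using cancel by (simp add: algebra_simps)
qed

end

lemma tensor_sum_primitive:
  assumes "tensor_eq smult xs [(c, e), (e, c)]" and "bilinear_map smult f smult"
  shows "tensor_sum f xs = f c e + f e c"
  using assms unfolding tensor_eq_def by (simp add: tensor_sum_def)

lemma bol_envelopingD:
  assumes "bol_enveloping smult V br br3 mul e Delta eps"
  shows "vector_space smult"
    and "bilinear_map smult mul smult"
    and "mul e x = x" and "mul x e = x"
    and "c \<in> V \<Longrightarrow> tensor_eq smult (Delta c) [(c, e), (e, c)]"
    and "sum_list (map (\<lambda>(a1, a2). mul a1 (mul y (mul a2 z))) (Delta a)) =
         sum_list (map (\<lambda>(a1, a2). mul (mul a1 (mul y a2)) z) (Delta a))"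
    and "a \<in> V \<Longrightarrow> b \<in> V \<Longrightarrow> br a b = mul a b - mul b a"
proof -
  note U = assms[unfolded bol_enveloping_def]
  show "vector_space smult"
    using U by (simp add: bol_algebra_def)
  show "bilinear_map smult mul smult"
    using U by blast
  show "mul e x = x" "mul x e = x"
    using U by auto
  show "c \<in> V \<Longrightarrow> tensor_eq smult (Delta c) [(c, e), (e, c)]"
    using U by blast
  show "sum_list (map (\<lambda>(a1, a2). mul a1 (mul y (mul a2 z))) (Delta a)) =
      sum_list (map (\<lambda>(a1, a2). mul (mul a1 (mul y a2)) z) (Delta a))"
    using U by blast
  show "a \<in> V \<Longrightarrow> b \<in> V \<Longrightarrow> br a b = mul a b - mul b a"
    using U by blast
qed

lemma bol_enveloping_associator_skew:
  assumes U: "bol_enveloping smult V br br3 mul e Delta eps" and "c \<in> V"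
  shows "biadditive_product.associator mul c y z = - biadditive_product.associator mul y c z"
proof -
  have bil: "bilinear_map smult mul smult"
    by (rule bol_envelopingD(2)[OF U])
  interpret biadditive_product mul
    using bil by unfold_locales (simp_all add: bilinear_map_def)
  have scale: "mul (smult k x) w = smult k (mul x w)" "mul x (smult k w) = smult k (mul x w)" for k x w
    using bil unfolding bilinear_map_def by blast+
  note tensor_sum_Delta_c = tensor_sum_primitive[OF bol_envelopingD(5)[OF U \<open>c \<in> V\<close>]]
  have "bilinear_map smult (\<lambda>p q. mul p (mul y (mul q z))) smult"
    and "bilinear_map smult (\<lambda>p q. mul (mul p (mul y q)) z) smult"
    unfolding bilinear_map_def by (simp_all add: add_mult mult_add scale)
  then have "tensor_sum (\<lambda>p q. mul p (mul y (mul q z))) (Delta c) = mul c (mul y z) + mul y (mul c z)"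
    and "tensor_sum (\<lambda>p q. mul (mul p (mul y q)) z) (Delta c) = mul (mul c y) z + mul (mul y c) z"
    by (simp_all add: tensor_sum_Delta_c bol_envelopingD(3,4)[OF U])
  moreover have "tensor_sum (\<lambda>p q. mul p (mul y (mul q z))) (Delta c) =
      tensor_sum (\<lambda>p q. mul (mul p (mul y q)) z) (Delta c)"
    using bol_envelopingD(6)[OF U] unfolding tensor_sum_def by blast
  ultimately have "mul c (mul y z) + mul y (mul c z) = mul (mul c y) z + mul (mul y c) z"
    by simp
  then show ?thesis
    unfolding associator_def by (simp add: algebra_simps)
qed

lemma is_derivation_left_mult_commutator:
  assumes "vector_space smult" and bil: "bilinear_map smult mul smult"
    and skew_a: "\<And>y z. biadditive_product.associator mul a y z = - biadditive_product.associator mul y a z"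
    and skew_b: "\<And>y z. biadditive_product.associator mul b y z = - biadditive_product.associator mul y b z"
    and "mul a b = mul b a"
  shows "is_derivation smult mul (\<lambda>x. mul a (mul b x) - mul b (mul a x))"
proof -
  interpret vector_space smult by fact
  interpret biadditive_product mul
    using bil by unfold_locales (simp_all add: bilinear_map_def)
  have "mul x (smult c y) = smult c (mul x y)" for c x y
    using bil unfolding bilinear_map_def by blast
  then show ?thesis
    unfolding is_derivation_def
    using left_mult_commutator_Leibniz[OF skew_a skew_b \<open>mul a b = mul b a\<close>]
    by (simp add: mult_add scale_right_diff_distrib)
qed

theorem lemma2p1:
  fixes smult :: "'k::field_char_0 \<Rightarrow> 'u::ab_group_add \<Rightarrow> 'u"
    and V :: "'u set" and br :: "'u \<Rightarrow> 'u \<Rightarrow> 'u" and br3 :: "'u \<Rightarrow> 'u \<Rightarrow> 'u \<Rightarrow> 'u"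
    and mul :: "'u \<Rightarrow> 'u \<Rightarrow> 'u" and e :: 'u
    and Delta :: "'u \<Rightarrow> ('u \<times> 'u) list" and eps :: "'u \<Rightarrow> 'k"
    and a b :: 'u
  assumes "bol_enveloping smult V br br3 mul e Delta eps"
    and "a \<in> V" and "b \<in> V" and "br a b = 0"
  shows "is_derivation smult mul (\<lambda>x. mul a (mul b x) - mul b (mul a x))"
proof (rule is_derivation_left_mult_commutator)
  show "vector_space smult" and "bilinear_map smult mul smult"
    using bol_envelopingD(1,2)[OF assms(1)] .
  show "mul a b = mul b a"
    using bol_envelopingD(7)[OF assms(1-3)] \<open>br a b = 0\<close> by simp
  show "biadditive_product.associator mul a y z = - biadditive_product.associator mul y a z"
    and "biadditive_product.associator mul b y z = - biadditive_product.associator mul y b z" for y z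
    using bol_enveloping_associator_skew[OF assms(1)] assms(2,3) by blast+
qed

end
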